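(* Let $k\ge2$, $p\in\mathbb{S}^n$, $R\in(0,\pi/2)$, $B_R=\{q:\mathbf{d}_p(q)\le R\}$, $y\in\partial B_R$, and let $\gamma:[R,\pi]\to\mathbb{S}^n$ be the unit-speed minimizing geodesic from $y$ to $-p$, parametrized so that $\mathbf{d}_p(\gamma(s))=s$. Suppose $u$ is a bounded integrable function on $[R,\pi]$. Then the vector field $x\mapsto\int_R^\pi u(s)\Psi_{\gamma(s)}(x)\,ds$ on $B_R\setminus\{y\}$ satisfies \[\int_R^\pi u(s)\Psi_{\gamma(s)}\,ds=o(\mathbf{d}_y^{1-k})\quad\text{as }\mathbf{d}_y\searrow0.\]
   Context: $\mathbb{S}^n$ is the unit round sphere with Levi-Civita connection $\nabla$; $\mathbf{d}_q$ is geodesic distance from $q$. $I_k(r)=\int_0^r\sin^{k-1}s\,ds$, $\varphi(t)=I_k(t)\sin^{1-k}t$ for $t\in(0,\pi)$, $\varphi(0)=0$, $\Phi_q=(\varphi\circ\mathbf{d}_q)\nabla\mathbf{d}_q$ on $\mathbb{S}^n\setminus\{-q\}$, and $\Psi_q:=\Phi_{-q}$ on $\mathbb{S}^n\setminus\{q\}$. *)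

theory Defs
  imports "HOL-Analysis.Analysis"
begin

text \<open>The unit round sphere S^n is modelled as sphere 0 1 in a Euclidean space 'a
  (n = DIM('a) - 1); tangent vectors / vector fields live in the ambient space.\<close>

definition sdist :: "'a::euclidean_space \<Rightarrow> 'a \<Rightarrow> real" where
  "sdist q x = arccos (q \<bullet> x)"

text \<open>Riemannian gradient (for the induced round metric) of a function f on the sphere at x:
  the tangent vector v (v orthogonal to x) representing the derivative of f along the sphere.\<close>
definition sgrad :: "('a::euclidean_space \<Rightarrow> real) \<Rightarrow> 'a \<Rightarrow> 'a" where
  "sgrad f x = (THE v. v \<bullet> x = 0 \<and> (f has_derivative (\<lambda>h. v \<bullet> h)) (at x within sphere 0 1))"

definition Ik :: "nat \<Rightarrow> real \<Rightarrow> real" where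
  "Ik k r = integral {0..r} (\<lambda>s. sin s ^ (k - 1))"

definition phi :: "nat \<Rightarrow> real \<Rightarrow> real" where
  "phi k t = (if t = 0 then 0 else Ik k t / sin t ^ (k - 1))"

text \<open>Phi_q = (phi o d_q) grad d_q, meaningful on S^n minus {-q}.\<close>
definition Phi :: "nat \<Rightarrow> 'a::euclidean_space \<Rightarrow> 'a \<Rightarrow> 'a" where
  "Phi k q x = phi k (sdist q x) *\<^sub>R sgrad (sdist q) x"

definition Psi :: "nat \<Rightarrow> 'a::euclidean_space \<Rightarrow> 'a \<Rightarrow> 'a" where
  "Psi k q x = Phi k (- q) x"

end

theory Submission
  imports Defs
begin

text \<open>
  For x in B_R close to y put \<delta> = d_y(x). The triangle inequality along \<gamma>, which realises
  d_p(\<gamma> s) = s and d_y(\<gamma> s) = s - R, pins the distance d = d(\<gamma> s, x) between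
  max(s - R, \<delta> / 2) and \<pi> - R / 2. Since |\<Psi>_q| = |\<phi>(\<pi> - d_q)| \<le> \<pi> / sin^(k-1) d_q and
  the concave sine dominates its chord on [0, \<pi> - R / 2], the integrand is O(max(s - R, \<delta>)^(1-k)).
  Splitting [R, \<pi>] at R + sqrt \<delta> then bounds \<delta>^(k-1) times the integral by a constant
  times sqrt \<delta>.
\<close>

lemma inner_unit_bounds:
  fixes a b :: "'a::euclidean_space"
  assumes "norm a = 1" "norm b = 1"
  shows "-1 \<le> a \<bullet> b" "a \<bullet> b \<le> 1"
  using Cauchy_Schwarz_ineq2[of a b] assms by (simp_all add: abs_le_iff)

lemma sdist_commute: "sdist a b = sdist b a"
  by (simp add: sdist_def inner_commute)

lemma sdist_self [simp]: "norm a = 1 \<Longrightarrow> sdist a a = 0"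
  by (simp add: sdist_def dot_square_norm)

lemma sdist_bounds:
  fixes a b :: "'a::euclidean_space"
  assumes "norm a = 1" "norm b = 1"
  shows "0 \<le> sdist a b" "sdist a b \<le> pi"
  using inner_unit_bounds[OF assms] by (auto simp: sdist_def arccos_lbound arccos_ubound)

lemma sdist_uminus_left:
  fixes a b :: "'a::euclidean_space"
  assumes "norm a = 1" "norm b = 1"
  shows "sdist (- a) b = pi - sdist a b"
  using inner_unit_bounds[OF assms] by (simp add: sdist_def arccos_minus)

lemma norm_diff_unit_sq:
  fixes a b :: "'a::euclidean_space"
  assumes "norm a = 1" "norm b = 1"
  shows "norm (a - b)^2 = 2 - 2 * (a \<bullet> b)"
proof -
  have "norm (a - b)^2 = a \<bullet> a - 2 * (a \<bullet> b) + b \<bullet> b"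
    unfolding power2_norm_eq_inner by (simp add: inner_diff_left inner_diff_right inner_commute)
  then show ?thesis using assms by (simp add: dot_square_norm)
qed

lemma sdist_eq_0_iff:
  fixes a b :: "'a::euclidean_space"
  assumes "norm a = 1" "norm b = 1"
  shows "sdist a b = 0 \<longleftrightarrow> a = b"
  using inner_unit_bounds[OF assms] norm_diff_unit_sq[OF assms] assms
  by (auto simp: sdist_def arccos_eq_0_iff)

lemma norm_orthogonal_part_unit:
  fixes a b :: "'a::euclidean_space"
  assumes "norm a = 1" "norm b = 1"
  shows "norm (a - (a \<bullet> b) *\<^sub>R b) = sqrt (1 - (a \<bullet> b)^2)"
proof -
  have "norm (a - (a \<bullet> b) *\<^sub>R b)^2 = a \<bullet> a - 2 * (a \<bullet> b) * (a \<bullet> b) + (a \<bullet> b)^2 * (b \<bullet> b)"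
    unfolding power2_norm_eq_inner
    by (simp add: inner_diff_left inner_diff_right inner_commute algebra_simps power2_eq_square)
  also have "\<dots> = 1 - (a \<bullet> b)^2"
    using assms by (simp add: dot_square_norm power2_eq_square)
  finally show ?thesis by (metis norm_ge_zero real_sqrt_unique)
qed

lemma sdist_triangle:
  fixes a b c :: "'a::euclidean_space"
  assumes a: "norm a = 1" and b: "norm b = 1" and c: "norm c = 1"
  shows "sdist a c \<le> sdist a b + sdist b c"
proof (cases "sdist a b + sdist b c \<le> pi")
  case False
  then show ?thesis using sdist_bounds[OF a c] by linarith
next
  case True
  define \<alpha> \<beta> where "\<alpha> = sdist a b" and "\<beta> = sdist b c"
  have cos: "cos \<alpha> = a \<bullet> b" "cos \<beta> = b \<bullet> c"
    using inner_unit_bounds[OF a b] inner_unit_bounds[OF b c]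
    by (auto simp: \<alpha>_def \<beta>_def sdist_def cos_arccos)
  have sin: "sin \<alpha> = sqrt (1 - (a \<bullet> b)^2)" "sin \<beta> = sqrt (1 - (b \<bullet> c)^2)"
    using inner_unit_bounds[OF a b] inner_unit_bounds[OF b c]
    by (auto simp: \<alpha>_def \<beta>_def sdist_def sin_arccos)
  \<comment> \<open>Cauchy-Schwarz for the components of a and c orthogonal to b yields cos (\<alpha> + \<beta>) \<le> a \<bullet> c.\<close>
  have "(a - (a \<bullet> b) *\<^sub>R b) \<bullet> (c - (c \<bullet> b) *\<^sub>R b)
      = a \<bullet> c - (a \<bullet> b) * (b \<bullet> c) - (a \<bullet> b) * (b \<bullet> c) + (a \<bullet> b) * (b \<bullet> c) * (b \<bullet> b)"
    by (simp add: inner_diff_left inner_diff_right inner_commute algebra_simps)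
  also have "\<dots> = a \<bullet> c - (a \<bullet> b) * (b \<bullet> c)"
    using b by (simp add: dot_square_norm)
  finally have "\<bar>a \<bullet> c - (a \<bullet> b) * (b \<bullet> c)\<bar> \<le> sin \<alpha> * sin \<beta>"
    using Cauchy_Schwarz_ineq2[of "a - (a \<bullet> b) *\<^sub>R b" "c - (c \<bullet> b) *\<^sub>R b"] sin
      norm_orthogonal_part_unit[OF a b] norm_orthogonal_part_unit[OF c b]
    by (simp add: inner_commute[of c b])
  then have "cos (\<alpha> + \<beta>) \<le> a \<bullet> c" by (simp add: cos_add cos)
  then have "arccos (a \<bullet> c) \<le> arccos (cos (\<alpha> + \<beta>))"
    using inner_unit_bounds[OF a c] by (intro arccos_le_arccos) auto
  also have "arccos (cos (\<alpha> + \<beta>)) = \<alpha> + \<beta>"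
    using True sdist_bounds[OF a b] sdist_bounds[OF b c] by (intro arccos_cos) (auto simp: \<alpha>_def \<beta>_def)
  finally show ?thesis by (simp add: sdist_def \<alpha>_def \<beta>_def)
qed

lemma tendsto_sdist_self:
  fixes y :: "'a::euclidean_space"
  assumes "norm y = 1"
  shows "(sdist y \<longlongrightarrow> 0) (at y within sphere 0 1)"
proof -
  have "continuous_on (sphere 0 1) (sdist y)"
    unfolding sdist_def using inner_unit_bounds[OF assms]
    by (intro continuous_on_arccos continuous_intros) auto
  then show ?thesis
    using assms by (auto simp: continuous_on_def dest: bspec[of _ _ y])
qed

lemma has_derivative_great_circle:
  fixes f :: "'a::euclidean_space \<Rightarrow> real"
  assumes f: "(f has_derivative L) (at x within sphere 0 1)"
    and x: "norm x = 1" and e: "norm e = 1" and xe: "x \<bullet> e = 0"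
  shows "((\<lambda>t. f (cos t *\<^sub>R x + sin t *\<^sub>R e)) has_derivative (\<lambda>t. L (t *\<^sub>R e))) (at 0)"
proof -
  define \<alpha> where "\<alpha> t = cos t *\<^sub>R x + sin t *\<^sub>R e" for t :: real
  have "norm (\<alpha> t) = 1" for t
  proof -
    have "norm (\<alpha> t)^2 = (cos t)^2 * (x \<bullet> x) + 2 * cos t * sin t * (x \<bullet> e) + (sin t)^2 * (e \<bullet> e)"
      unfolding power2_norm_eq_inner \<alpha>_def
      by (simp add: inner_add_left inner_add_right inner_commute algebra_simps power2_eq_square)
    also have "\<dots> = 1" using x e xe by (simp add: dot_square_norm)
    finally show ?thesis using norm_ge_zero[of "\<alpha> t"] by (auto simp: power2_eq_1_iff)
  qed
  then have "range \<alpha> \<subseteq> sphere 0 1" by auto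
  then have "(f has_derivative L) (at (\<alpha> 0) within range \<alpha>)"
    using has_derivative_subset[OF f] by (simp add: \<alpha>_def)
  moreover have "(\<alpha> has_derivative (\<lambda>t. t *\<^sub>R e)) (at 0)"
    unfolding \<alpha>_def by (rule derivative_eq_intros refl | simp)+
  ultimately show ?thesis
    using has_derivative_in_compose by (fastforce simp: \<alpha>_def)
qed

lemma sphere_tangent_gradient_unique:
  fixes f :: "'a::euclidean_space \<Rightarrow> real"
  assumes x: "norm x = 1" and "v \<bullet> x = 0" "w \<bullet> x = 0"
    and v: "(f has_derivative (\<lambda>h. v \<bullet> h)) (at x within sphere 0 1)"
    and w: "(f has_derivative (\<lambda>h. w \<bullet> h)) (at x within sphere 0 1)"
  shows "v = w"
proof (rule ccontr)
  assume "v \<noteq> w"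
  define e where "e = (w - v) /\<^sub>R norm (w - v)"
  have e: "norm e = 1" using \<open>v \<noteq> w\<close> by (simp add: e_def)
  have xe: "x \<bullet> e = 0" using assms(2,3) by (simp add: e_def inner_diff_right inner_commute)
  have "(\<lambda>t. v \<bullet> (t *\<^sub>R e)) = (\<lambda>t. w \<bullet> (t *\<^sub>R e))"
    using has_derivative_unique[OF has_derivative_great_circle[OF v x e xe]
        has_derivative_great_circle[OF w x e xe]] .
  from fun_cong[OF this, of 1] have "(w - v) \<bullet> e = 0" by (simp add: inner_diff_left)
  then show False using \<open>v \<noteq> w\<close> by (simp add: e_def)
qed

lemma abs_inner_unit_less_1:
  fixes a b :: "'a::euclidean_space"
  assumes a: "norm a = 1" and b: "norm b = 1" and "a \<noteq> b" "a \<noteq> - b"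
  shows "\<bar>a \<bullet> b\<bar> < 1"
proof -
  have "a \<bullet> b \<noteq> 1" using norm_diff_unit_sq[OF a b] \<open>a \<noteq> b\<close> by auto
  moreover have "a \<bullet> b \<noteq> -1"
  proof
    assume "a \<bullet> b = -1"
    then have "norm (a - - b) = 0" using norm_diff_unit_sq[of a "- b"] a b by simp
    then show False using \<open>a \<noteq> - b\<close> by (simp add: add_eq_0_iff2)
  qed
  ultimately show ?thesis using inner_unit_bounds[OF a b] by auto
qed

lemma sdist_has_derivative_within_sphere:
  fixes q x :: "'a::euclidean_space"
  defines "c \<equiv> q \<bullet> x"
  assumes x: "norm x = 1" and c: "\<bar>c\<bar> < 1"
  shows "(sdist q has_derivative (\<lambda>h. ((c *\<^sub>R x - q) /\<^sub>R sqrt (1 - c^2)) \<bullet> h))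
           (at x within sphere 0 1)"
proof -
  \<comment> \<open>Subtracting c/2 (z \<bullet> z - 1), which vanishes on the sphere, makes the ambient gradient
    of z \<mapsto> q \<bullet> z tangent at x.\<close>
  define g where "g z = q \<bullet> z - c / 2 * (z \<bullet> z - 1)" for z
  have gx: "g x = c" using x by (simp add: g_def c_def dot_square_norm)
  have dg: "(g has_derivative (\<lambda>h. (q - c *\<^sub>R x) \<bullet> h)) (at x)"
    unfolding g_def by (rule derivative_eq_intros refl | simp add: inner_diff_left inner_diff_right inner_commute)+
  have "(arccos has_real_derivative - inverse (sqrt (1 - c^2))) (at (g x))"
    using DERIV_arccos[of c] c by (simp add: gx)
  then have "((\<lambda>z. arccos (g z)) has_derivative
      (\<lambda>h. - inverse (sqrt (1 - c^2)) * ((q - c *\<^sub>R x) \<bullet> h))) (at x)"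
    using has_derivative_compose[OF dg] by (fastforce simp: has_field_derivative_def)
  moreover have "(\<lambda>h. - inverse (sqrt (1 - c^2)) * ((q - c *\<^sub>R x) \<bullet> h))
      = (\<lambda>h. ((c *\<^sub>R x - q) /\<^sub>R sqrt (1 - c^2)) \<bullet> h)"
    by (simp add: inner_diff_left divide_inverse_commute algebra_simps)
  ultimately have "((\<lambda>z. arccos (g z)) has_derivative
      (\<lambda>h. ((c *\<^sub>R x - q) /\<^sub>R sqrt (1 - c^2)) \<bullet> h)) (at x within sphere 0 1)"
    by (simp add: has_derivative_at_withinI)
  then show ?thesis
    by (rule has_derivative_transform_within[OF _ zero_less_one])
      (use x in \<open>auto simp: g_def sdist_def dot_square_norm\<close>)
qed

lemma sgrad_sdist:
  fixes q x :: "'a::euclidean_space"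
  assumes "norm x = 1" "\<bar>q \<bullet> x\<bar> < 1"
  shows "sgrad (sdist q) x = ((q \<bullet> x) *\<^sub>R x - q) /\<^sub>R sqrt (1 - (q \<bullet> x)^2)"
proof -
  have "((q \<bullet> x) *\<^sub>R x - q) \<bullet> x = 0"
    using assms(1) by (simp add: inner_diff_left dot_square_norm)
  then have "(((q \<bullet> x) *\<^sub>R x - q) /\<^sub>R sqrt (1 - (q \<bullet> x)^2)) \<bullet> x = 0"
    by simp
  then show ?thesis
    unfolding sgrad_def
    using sdist_has_derivative_within_sphere[OF assms] sphere_tangent_gradient_unique[OF assms(1)]
    by (intro the_equality) blast+
qed

lemma norm_sgrad_sdist:
  fixes q x :: "'a::euclidean_space"
  assumes q: "norm q = 1" and x: "norm x = 1" and "x \<noteq> q" "x \<noteq> - q"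
  shows "norm (sgrad (sdist q) x) = 1"
proof -
  have c: "\<bar>q \<bullet> x\<bar> < 1"
    using abs_inner_unit_less_1[OF q x] assms(3,4) by (metis minus_minus)
  then have "0 < sqrt (1 - (q \<bullet> x)^2)" by (simp add: abs_square_less_1)
  moreover have "norm ((q \<bullet> x) *\<^sub>R x - q) = sqrt (1 - (q \<bullet> x)^2)"
    using norm_orthogonal_part_unit[OF q x] by (simp add: norm_minus_commute)
  ultimately show ?thesis by (simp add: sgrad_sdist[OF x c])
qed

lemma norm_Phi:
  fixes q x :: "'a::euclidean_space"
  assumes "norm q = 1" "norm x = 1" "x \<noteq> q" "x \<noteq> - q"
  shows "norm (Phi k q x) = \<bar>phi k (sdist q x)\<bar>"
  using norm_sgrad_sdist[OF assms] by (simp add: Phi_def)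

lemma Ik_bounds:
  assumes "0 \<le> t" "t \<le> pi"
  shows "0 \<le> Ik k t" "Ik k t \<le> t"
proof -
  have int: "(\<lambda>s. sin s ^ (k - 1)) integrable_on {0..t}"
    by (intro integrable_continuous_interval continuous_intros)
  have sin: "0 \<le> sin s" "sin s \<le> 1" if "s \<in> {0..t}" for s
    using that assms by (auto intro: sin_ge_zero)
  show "0 \<le> Ik k t"
    unfolding Ik_def using sin by (intro integral_nonneg[OF int]) auto
  have "Ik k t \<le> integral {0..t} (\<lambda>s. 1)"
    unfolding Ik_def using sin by (intro integral_le[OF int]) (auto intro: power_le_one)
  also have "\<dots> = t" using assms by simp
  finally show "Ik k t \<le> t" .
qed

lemma abs_phi_le:
  assumes "0 < t" "t < pi"
  shows "\<bar>phi k t\<bar> \<le> t / sin t ^ (k - 1)"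
  using Ik_bounds[of t k] sin_gt_zero[OF assms] assms
  by (simp add: phi_def divide_right_mono)

lemma sin_ge_chord:
  assumes "0 < L" "L \<le> pi" "0 \<le> d" "d \<le> L"
  shows "sin L / L * d \<le> sin d"
proof -
  have "concave_on {0..pi} sin"
    by (rule f''_le0_imp_concave[where f' = cos and f'' = "\<lambda>x. - sin x"])
      (auto intro!: derivative_eq_intros sin_ge_zero)
  then have "(1 - d / L) * sin 0 + d / L * sin L \<le> sin ((1 - d / L) *\<^sub>R 0 + (d / L) *\<^sub>R L)"
    using assms by (intro concave_onD) auto
  then show ?thesis using assms by (simp add: mult.commute)
qed

lemma norm_Psi_le:
  fixes q x :: "'a::euclidean_space"
  assumes q: "norm q = 1" and x: "norm x = 1" and "0 < sdist q x" "sdist q x < pi"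
  shows "norm (Psi k q x) \<le> pi / sin (sdist q x) ^ (k - 1)"
proof -
  have "x \<noteq> q" using assms(3) q by auto
  moreover have "x \<noteq> - q"
    using assms(4) sdist_uminus_left[OF q q] q by (auto simp: sdist_commute)
  ultimately have "norm (Psi k q x) = \<bar>phi k (pi - sdist q x)\<bar>"
    using norm_Phi[of "- q" x k] q x by (simp add: Psi_def sdist_uminus_left)
  also have "\<dots> \<le> (pi - sdist q x) / sin (sdist q x) ^ (k - 1)"
    using abs_phi_le[of "pi - sdist q x" k] assms(3,4) by simp
  also have "\<dots> \<le> pi / sin (sdist q x) ^ (k - 1)"
    using assms(3,4) sin_gt_zero[of "sdist q x"] by (intro divide_right_mono) auto
  finally show ?thesis .
qed

lemma divide_powr_one_minus:
  fixes d :: real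
  assumes "0 < d" "1 \<le> k"
  shows "a / d powr (1 - real k) = a * d ^ (k - 1)"
proof -
  have "d powr (1 - real k) = d powr (- real (k - 1))"
    using assms(2) by (simp add: of_nat_diff)
  then show ?thesis
    using assms(1) by (simp add: powr_minus powr_realpow divide_inverse)
qed

lemma norm_integral_le_integral:
  fixes f :: "'n::euclidean_space \<Rightarrow> 'b::banach"
  assumes G: "G integrable_on S" and fG: "\<And>s. s \<in> S \<Longrightarrow> norm (f s) \<le> G s"
  shows "norm (integral S f) \<le> integral S G"
proof (cases "f integrable_on S")
  case True
  then show ?thesis using integral_norm_bound_integral[OF True G] fG by blast
next
  case False
  have "0 \<le> integral S G"
    using fG by (intro integral_nonneg[OF G]) (meson norm_ge_zero order_trans)
  then show ?thesis using False by (simp add: not_integrable_integral)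
qed

lemma norm_integral_le_max_power:
  fixes g :: "real \<Rightarrow> 'b::banach"
  assumes ab: "a \<le> b" and \<delta>: "0 < \<delta>" "\<delta> \<le> 1" and n: "1 \<le> n"
    and g: "\<And>s. s \<in> {a..b} \<Longrightarrow> norm (g s) \<le> M / max (s - a) \<delta> ^ n"
  shows "norm (integral {a..b} g) * \<delta> ^ n \<le> M * (1 + (b - a)) * sqrt \<delta>"
proof -
  \<comment> \<open>On [a, a + sqrt \<delta>] the integrand is O(\<delta>^-n), beyond it only O(sqrt \<delta>^-n).\<close>
  define \<eta> where "\<eta> = sqrt \<delta>"
  have \<eta>: "0 < \<eta>" "\<eta> \<le> 1" "\<delta> = \<eta>^2" using \<delta> by (auto simp: \<eta>_def)
  have "0 \<le> M / \<delta> ^ n" using g[of a] ab \<delta> by (auto intro: order_trans[OF norm_ge_zero])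
  then have M: "0 \<le> M" using zero_less_power[OF \<delta>(1), of n] by (auto simp: zero_le_divide_iff)
  have anti: "M / m ^ n \<le> M / l ^ n" if "0 < l" "l \<le> m" for l m
    using that M by (intro divide_left_mono power_mono mult_pos_pos) auto
  define G where "G s = (if s \<in> {..a + \<eta>} then M / \<delta> ^ n else 0) + M / \<eta> ^ n" for s
  have gG: "norm (g s) \<le> G s" if s: "s \<in> {a..b}" for s
  proof (cases "s \<le> a + \<eta>")
    case True
    then show ?thesis
      using g[OF s] anti[of \<delta> "max (s - a) \<delta>"] \<delta> \<eta>(1) M
      by (auto simp: G_def intro: add_increasing2)
  next
    case False
    then have "\<eta> \<le> max (s - a) \<delta>" by simp
    then show ?thesis
      using False g[OF s] anti[of \<eta> "max (s - a) \<delta>"] \<eta>(1) by (simp add: G_def)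
  qed
  have cut: "{..a + \<eta>} \<inter> {a..b} = {a..min b (a + \<eta>)}" by auto
  have near: "(\<lambda>s. if s \<in> {..a + \<eta>} then M / \<delta> ^ n else 0) integrable_on {a..b}"
    "integral {a..b} (\<lambda>s. if s \<in> {..a + \<eta>} then M / \<delta> ^ n else 0) = M / \<delta> ^ n * (min b (a + \<eta>) - a)"
    unfolding integrable_restrict_Int integral_restrict_Int cut using ab \<eta> by auto
  have "G integrable_on {a..b}"
    unfolding G_def by (intro integrable_add near(1) integrable_const_ivl)
  then have "norm (integral {a..b} g) \<le> integral {a..b} G"
    by (rule norm_integral_le_integral) (rule gG)
  also have "\<dots> = M / \<delta> ^ n * (min b (a + \<eta>) - a) + M / \<eta> ^ n * (b - a)"
    using near ab unfolding G_def by (subst integral_add) auto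
  also have "\<dots> \<le> M / \<delta> ^ n * \<eta> + M / \<eta> ^ n * (b - a)"
    using M \<delta> by (intro add_right_mono mult_left_mono) auto
  finally have "norm (integral {a..b} g) * \<delta> ^ n
      \<le> (M / \<delta> ^ n * \<eta> + M / \<eta> ^ n * (b - a)) * \<delta> ^ n"
    using \<delta> by (simp add: mult_right_mono)
  also have "\<dots> = M * \<eta> + M * (b - a) * \<eta> ^ n"
  proof -
    have "\<delta> ^ n = \<eta> ^ n * \<eta> ^ n"
      by (simp add: \<eta>(3) power2_eq_square power_mult_distrib)
    then show ?thesis using \<delta> \<eta> by (simp add: field_simps)
  qed
  also have "\<dots> \<le> M * \<eta> + M * (b - a) * \<eta>"
    using M ab \<eta> n power_decreasing[of 1 n \<eta>] by (intro add_left_mono mult_left_mono) auto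
  finally show ?thesis by (simp add: \<eta>_def algebra_simps)
qed

lemma sdist_beyond_boundary_bounds:
  fixes p y x z :: "'a::euclidean_space"
  assumes p: "norm p = 1" and y: "norm y = 1" and x: "norm x = 1" and z: "norm z = 1"
    and py: "sdist p y = R" and px: "sdist p x \<le> R"
    and pz: "sdist p z = s" and yz: "sdist y z = s - R"
  shows "max (s - R) (sdist y x / 2) \<le> sdist z x" "sdist z x \<le> pi - R + sdist y x"
proof -
  have "s \<le> sdist p x + sdist x z" using sdist_triangle[OF p x z] pz by simp
  moreover have "sdist y x \<le> sdist y z + sdist z x" by (rule sdist_triangle[OF y z x])
  ultimately show "max (s - R) (sdist y x / 2) \<le> sdist z x"
    using px yz by (simp add: sdist_commute[of x z])
  have "sdist z x \<le> sdist z y + sdist y x" by (rule sdist_triangle[OF z y x])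
  moreover have "sdist z x \<le> sdist z (- p) + sdist (- p) x"
    using sdist_triangle[of z "- p" x] z p x by simp
  moreover have "R \<le> sdist p x + sdist x y" using sdist_triangle[OF p x y] py by simp
  ultimately show "sdist z x \<le> pi - R + sdist y x"
    using yz pz sdist_uminus_left[OF p z] sdist_uminus_left[OF p x]
    by (simp add: sdist_commute[of z] sdist_commute[of x y])
qed

lemma norm_Psi_beyond_boundary_le:
  fixes p y x z :: "'a::euclidean_space" and R s :: real
  defines "L \<equiv> pi - R / 2"
  assumes p: "norm p = 1" and y: "norm y = 1" and x: "norm x = 1" and z: "norm z = 1"
    and py: "sdist p y = R" and px: "sdist p x \<le> R"
    and pz: "sdist p z = s" and yz: "sdist y z = s - R"
    and R: "0 < R" and \<delta>: "0 < sdist y x" "sdist y x \<le> R / 2"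
  shows "norm (Psi k z x) \<le> pi * (L / sin L) ^ (k - 1) / max (s - R) (sdist y x / 2) ^ (k - 1)"
proof -
  define m where "m = max (s - R) (sdist y x / 2)"
  have m: "0 < m" "m \<le> sdist z x" "sdist z x \<le> L"
    using sdist_beyond_boundary_bounds[OF p y x z py px pz yz] \<delta> by (auto simp: m_def L_def)
  have L: "0 < L" "L < pi" using R sdist_bounds[OF p y] py by (auto simp: L_def)
  have sinL: "0 < sin L" using L by (intro sin_gt_zero) auto
  have "sin L / L * m \<le> sin L / L * sdist z x"
    using L sinL m by (intro mult_left_mono) auto
  also have "\<dots> \<le> sin (sdist z x)"
    using L m by (intro sin_ge_chord) auto
  finally have "(sin L / L * m) ^ (k - 1) \<le> sin (sdist z x) ^ (k - 1)"
    using L sinL m by (intro power_mono) auto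
  then have "pi / sin (sdist z x) ^ (k - 1) \<le> pi / (sin L / L * m) ^ (k - 1)"
    using L sinL m by (intro frac_le) auto
  moreover have "norm (Psi k z x) \<le> pi / sin (sdist z x) ^ (k - 1)"
    using m L by (intro norm_Psi_le z x) auto
  ultimately show ?thesis
    using L sinL by (simp add: m_def power_divide power_mult_distrib field_simps)
qed

lemma norm_integral_Psi_geodesic_le:
  fixes p y x :: "'a::euclidean_space" and \<gamma> :: "real \<Rightarrow> 'a" and R U :: real
  defines "L \<equiv> pi - R / 2"
  assumes k: "2 \<le> k" and p: "norm p = 1" and y: "norm y = 1" and x: "norm x = 1"
    and R: "0 < R" and py: "sdist p y = R" and px: "sdist p x \<le> R"
    and \<gamma>: "\<And>s. s \<in> {R..pi} \<Longrightarrow> norm (\<gamma> s) = 1 \<and> sdist p (\<gamma> s) = s \<and> sdist y (\<gamma> s) = s - R"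
    and U: "\<And>s. s \<in> {R..pi} \<Longrightarrow> \<bar>u s\<bar> \<le> U"
    and "x \<noteq> y" and \<delta>: "sdist y x \<le> R / 2" "sdist y x \<le> 2"
  shows "norm (integral {R..pi} (\<lambda>s. u s *\<^sub>R Psi k (\<gamma> s) x)) / sdist y x powr (1 - real k)
     \<le> 2 ^ (k - 1) * (U * pi * (L / sin L) ^ (k - 1) * (1 + (pi - R))) * sqrt (sdist y x)"
proof -
  define \<delta> M where "\<delta> = sdist y x" and "M = U * pi * (L / sin L) ^ (k - 1)"
  have pos: "0 < sdist y x"
    using sdist_bounds[OF y x] sdist_eq_0_iff[OF y x] \<open>x \<noteq> y\<close> by force
  have "R \<le> pi" using sdist_bounds[OF p y] py by simp
  then have "0 \<le> U" using U[of R] by fastforce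
  have "0 < sin L" using R \<open>R \<le> pi\<close> by (auto simp: L_def intro: sin_gt_zero)
  then have "0 \<le> M" using R \<open>R \<le> pi\<close> \<open>0 \<le> U\<close> by (simp add: M_def L_def)
  have bound: "norm (u s *\<^sub>R Psi k (\<gamma> s) x) \<le> M / max (s - R) (\<delta> / 2) ^ (k - 1)"
    if s: "s \<in> {R..pi}" for s
  proof -
    have "norm (Psi k (\<gamma> s) x) \<le> pi * (L / sin L) ^ (k - 1) / max (s - R) (\<delta> / 2) ^ (k - 1)"
      using \<gamma>[OF s] norm_Psi_beyond_boundary_le[OF p y x _ py px _ _ R pos \<delta>(1)]
      unfolding L_def \<delta>_def by blast
    then have "\<bar>u s\<bar> * norm (Psi k (\<gamma> s) x)
        \<le> U * (pi * (L / sin L) ^ (k - 1) / max (s - R) (\<delta> / 2) ^ (k - 1))"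
      using U[OF s] \<open>0 \<le> U\<close> by (intro mult_mono) auto
    then show ?thesis by (simp add: M_def)
  qed
  have "norm (integral {R..pi} (\<lambda>s. u s *\<^sub>R Psi k (\<gamma> s) x)) / sdist y x powr (1 - real k)
      = 2 ^ (k - 1) * (norm (integral {R..pi} (\<lambda>s. u s *\<^sub>R Psi k (\<gamma> s) x)) * (\<delta> / 2) ^ (k - 1))"
    using pos k by (simp add: divide_powr_one_minus \<delta>_def power_divide)
  also have "\<dots> \<le> 2 ^ (k - 1) * (M * (1 + (pi - R)) * sqrt (\<delta> / 2))"
    using \<open>R \<le> pi\<close> pos \<delta> k bound by (intro mult_left_mono norm_integral_le_max_power) (auto simp: \<delta>_def)
  also have "\<dots> \<le> 2 ^ (k - 1) * (M * (1 + (pi - R)) * sqrt \<delta>)"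
    using \<open>R \<le> pi\<close> \<open>0 \<le> M\<close> pos by (intro mult_left_mono) (auto simp: \<delta>_def)
  finally show ?thesis by (simp add: \<delta>_def M_def)
qed

theorem lemma2p12:
  fixes k :: nat and p y :: "'a::euclidean_space" and R :: real
    and \<gamma> :: "real \<Rightarrow> 'a" and u :: "real \<Rightarrow> real"
  assumes "k \<ge> 2"
    and "p \<in> sphere 0 1"
    and "0 < R" "R < pi / 2"
    and "y \<in> sphere 0 1" "sdist p y = R"
    and "\<gamma> ` {R..pi} \<subseteq> sphere 0 1"
    and "\<gamma> R = y" "\<gamma> pi = - p"
    and "\<forall>s\<in>{R..pi}. \<forall>t\<in>{R..pi}. sdist (\<gamma> s) (\<gamma> t) = \<bar>s - t\<bar>"
    and "\<forall>s\<in>{R..pi}. sdist p (\<gamma> s) = s"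
    and "u integrable_on {R..pi}"
    and "bounded (u ` {R..pi})"
  shows "((\<lambda>x. norm (integral {R..pi} (\<lambda>s. u s *\<^sub>R Psi k (\<gamma> s) x))
                 / sdist y x powr (1 - real k))
          \<longlongrightarrow> 0) (at y within ({q \<in> sphere 0 1. sdist p q \<le> R} - {y}))"
proof -
  define S where "S = {q \<in> sphere 0 1. sdist p q \<le> R} - {y}"
  have p: "norm p = 1" and y: "norm y = 1" using assms(2,5) by auto
  have \<gamma>: "norm (\<gamma> s) = 1 \<and> sdist p (\<gamma> s) = s \<and> sdist y (\<gamma> s) = s - R" if "s \<in> {R..pi}" for s
    using that assms(3,4,7,8,10,11) pi_gt_zero by (force dest: bspec[of _ _ R])
  obtain U where U: "\<And>s. s \<in> {R..pi} \<Longrightarrow> \<bar>u s\<bar> \<le> U"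
    using assms(13) unfolding bounded_iff by (metis atLeastAtMost_iff image_eqI real_norm_def)
  define K where "K = 2 ^ (k - 1) * (U * pi * ((pi - R / 2) / sin (pi - R / 2)) ^ (k - 1) * (1 + (pi - R)))"
  have \<delta>: "(sdist y \<longlongrightarrow> 0) (at y within S)"
    using tendsto_sdist_self[OF y] by (rule tendsto_within_subset) (auto simp: S_def)
  have "\<forall>\<^sub>F x in at y within S. x \<in> S \<and> sdist y x < min (R / 2) 2"
    using order_tendstoD(2)[OF \<delta>, of "min (R / 2) 2"] assms(3)
    by (auto simp: eventually_at_filter elim: eventually_mono)
  then have "\<forall>\<^sub>F x in at y within S. norm (integral {R..pi} (\<lambda>s. u s *\<^sub>R Psi k (\<gamma> s) x))
      / sdist y x powr (1 - real k) \<le> K * sqrt (sdist y x)"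
    unfolding K_def
    by (rule eventually_mono)
      (rule norm_integral_Psi_geodesic_le[OF assms(1) p y _ assms(3,6) _ \<gamma> U]; auto simp: S_def)
  moreover have "((\<lambda>x. K * sqrt (sdist y x)) \<longlongrightarrow> 0) (at y within S)"
    using tendsto_mult_right_zero[of "\<lambda>x. sqrt (sdist y x)"] tendsto_real_sqrt[OF \<delta>] by simp
  ultimately show ?thesis
    unfolding S_def by (rule tendsto_sandwich[rotated, OF _ tendsto_const]) simp
qed

end
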